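(* Fix integers $k\ge 1$ and $\beta_0\in\mathbb{R}$. Let $R_0$ be a random $k\times 2$ matrix with $vec(R_0)\sim N\big(vec(\mu a_\Delta'),\ \Omega_0\otimes\Phi\big)$, where $a_\Delta=(\Delta,1)'$, $\Delta\in\mathbb{R}$, $\mu\in\mathbb{R}^k$, $\Omega_0$ is a $2\times 2$ positive definite matrix and $\Phi$ is a $k\times k$ positive definite matrix. The matrices $\Omega_0,\Phi$ are known but not fixed: the data are $(R_0,\Omega_0,\Phi)$ and the parameters are $(\Delta,\mu,\Omega_0,\Phi)$. Let the group $\mathcal{G}_L(k)$ of invertible $k\times k$ matrices act on the sample space by $g_1\circ(R_0,\Omega_0,\Phi)=(g_1R_0,\ \Omega_0,\ g_1\Phi g_1')$ and on the parameter space by $g_1\circ(\Delta,\mu,\Omega_0,\Phi)=(\Delta,\ g_1\mu,\ \Omega_0,\ g_1\Phi g_1')$. Define $$S=\Phi^{-1/2}R_0e_1\,(e_1'\Omega_0e_1)^{-1/2},\qquad T=\Phi^{-1/2}R_0\Omega_0^{-1}e_2\,(e_2'\Omega_0^{-1}e_2)^{-1/2},$$ where $e_1=(1,0)'$, $e_2=(0,1)'$, and $Q=[S:T]'[S:T]$. Define also $\lambda=\mu'\Phi^{-1}\mu$, $c=\Delta\,(e_1'\Omega_0e_1)^{-1/2}$ and $d=a_\Delta'\Omega_0^{-1}e_2\,(e_2'\Omega_0^{-1}e_2)^{-1/2}$. Then: (i) a maximal invariant in the sample space under this group action is $(Q,\Omega_0)$; and (ii) a maximal invariant in the parameter space is $(c^2\lambda,\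 cd\lambda,\ d^2\lambda,\ \Omega_0)$.
   Context: Origin of the setting: in the IV model with reduced form $R=\mu a'+\widetilde V$, $a=(\beta,1)'$, $vec(\widetilde V)\sim N(0,\Omega\otimes\Phi)$, one sets $B_0=\begin{pmatrix}1&0\\-\beta_0&1\end{pmatrix}$, $R_0=RB_0$, $\Omega_0=B_0'\Omega B_0$, $\Delta=\beta-\beta_0$; then $S$ and $T$ above coincide with $\Phi^{-1/2}Rb_0(b_0'\Omega b_0)^{-1/2}$ and $\Phi^{-1/2}R\Omega^{-1}a_0(a_0'\Omega^{-1}a_0)^{-1/2}$ with $b_0=(1,-\beta_0)'$, $a_0=(\beta_0,1)'$, and $c,d$ are the constants with $E[S]=c\,\Phi^{-1/2}\mu$, $E[T]=d\,\Phi^{-1/2}\mu$. $\Phi^{-1/2}$ denotes the symmetric positive definite inverse square root. A maximal invariant is an invariant function such that equal values imply the arguments lie in the same group orbit. *)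

theory Defs
  imports "HOL-Analysis.Analysis"
begin

definition pos_def_mat :: "real^'n^'n \<Rightarrow> bool" where
  "pos_def_mat A \<longleftrightarrow> transpose A = A \<and> (\<forall>x. x \<noteq> 0 \<longrightarrow> x \<bullet> (A *v x) > 0)"

definition inv_sqrt_mat :: "real^'n^'n \<Rightarrow> real^'n^'n" where
  "inv_sqrt_mat A = (THE M. pos_def_mat M \<and> M ** M = matrix_inv A)"

definition maximal_invariant ::
  "'g set \<Rightarrow> ('g \<Rightarrow> 'x \<Rightarrow> 'x) \<Rightarrow> 'x set \<Rightarrow> ('x \<Rightarrow> 'y) \<Rightarrow> bool" where
  "maximal_invariant G act X f \<longleftrightarrow>
     (\<forall>g\<in>G. \<forall>x\<in>X. f (act g x) = f x) \<and>
     (\<forall>x\<in>X. \<forall>y\<in>X. f x = f y \<longrightarrow> (\<exists>g\<in>G. y = act g x))"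

definition e1 :: "real^2" where "e1 = vector [1, 0]"
definition e2 :: "real^2" where "e2 = vector [0, 1]"

definition sample_space :: "((real^2^'k) \<times> (real^2^2) \<times> (real^'k^'k)) set" where
  "sample_space = {(R0, \<Omega>0, \<Phi>). pos_def_mat \<Omega>0 \<and> pos_def_mat \<Phi>}"

definition sample_act :: "real^'k^'k \<Rightarrow> (real^2^'k) \<times> (real^2^2) \<times> (real^'k^'k)
    \<Rightarrow> (real^2^'k) \<times> (real^2^2) \<times> (real^'k^'k)" where
  "sample_act g1 x = (case x of (R0, \<Omega>0, \<Phi>) \<Rightarrow> (g1 ** R0, \<Omega>0, g1 ** \<Phi> ** transpose g1))"

definition S_stat :: "real^2^'k \<Rightarrow> real^2^2 \<Rightarrow> real^'k^'k \<Rightarrow> real^'k" where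
  "S_stat R0 \<Omega>0 \<Phi> = (1 / sqrt (e1 \<bullet> (\<Omega>0 *v e1))) *\<^sub>R (inv_sqrt_mat \<Phi> *v (R0 *v e1))"

definition T_stat :: "real^2^'k \<Rightarrow> real^2^2 \<Rightarrow> real^'k^'k \<Rightarrow> real^'k" where
  "T_stat R0 \<Omega>0 \<Phi> = (1 / sqrt (e2 \<bullet> (matrix_inv \<Omega>0 *v e2))) *\<^sub>R
      (inv_sqrt_mat \<Phi> *v (R0 *v (matrix_inv \<Omega>0 *v e2)))"

definition Q_stat :: "real^2^'k \<Rightarrow> real^2^2 \<Rightarrow> real^'k^'k \<Rightarrow> real^2^2" where
  "Q_stat R0 \<Omega>0 \<Phi> =
     (let ST = (\<chi> i. vector [S_stat R0 \<Omega>0 \<Phi> $ i, T_stat R0 \<Omega>0 \<Phi> $ i]) :: real^2^'k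
      in transpose ST ** ST)"

definition param_act :: "real^'k^'k \<Rightarrow> real \<times> (real^'k) \<times> (real^2^2) \<times> (real^'k^'k)
    \<Rightarrow> real \<times> (real^'k) \<times> (real^2^2) \<times> (real^'k^'k)" where
  "param_act g1 p = (case p of (\<Delta>, \<mu>, \<Omega>0, \<Phi>) \<Rightarrow>
      (\<Delta>, g1 *v \<mu>, \<Omega>0, g1 ** \<Phi> ** transpose g1))"

definition lambda_par :: "real^'k \<Rightarrow> real^'k^'k \<Rightarrow> real" where
  "lambda_par \<mu> \<Phi> = \<mu> \<bullet> (matrix_inv \<Phi> *v \<mu>)"

definition c_par :: "real \<Rightarrow> real^2^2 \<Rightarrow> real" where
  "c_par \<Delta> \<Omega>0 = \<Delta> / sqrt (e1 \<bullet> (\<Omega>0 *v e1))"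

definition d_par :: "real \<Rightarrow> real^2^2 \<Rightarrow> real" where
  "d_par \<Delta> \<Omega>0 = (vector [\<Delta>, 1] \<bullet> (matrix_inv \<Omega>0 *v e2)) / sqrt (e2 \<bullet> (matrix_inv \<Omega>0 *v e2))"

end

theory Submission
  imports Defs
begin

text \<open>Both parts rest on one classification. If the Gram matrix of \<open>x\<^sub>1, x\<^sub>2\<close> in the inner
product of \<open>\<Phi>\<inverse>\<close> equals that of \<open>y\<^sub>1, y\<^sub>2\<close> in the inner product of \<open>\<Phi>'\<inverse>\<close>, then some invertible
\<open>g\<close> has \<open>g x\<^sub>i = y\<^sub>i\<close> and \<open>g \<Phi> g' = \<Phi>'\<close>: after whitening both sides with the inverse square
roots the Gram condition is Euclidean, and is met by an orthogonal map (a rotation followed by a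
reflection).

\<open>Q\<close> is the Gram matrix of \<open>R\<^sub>0\<close> applied to two fixed directions spanning \<open>\<real>\<^sup>2\<close>, so equal \<open>Q\<close>
gives \<open>g R\<^sub>0 = R\<^sub>0'\<close>. In the parameter space the Gram matrix of \<open>\<mu>\<close> is \<open>\<lambda>\<close>, and
\<open>(c\<^sup>2\<lambda>, cd\<lambda>, d\<^sup>2\<lambda>)\<close> determines \<open>\<Delta>\<close> and \<open>\<lambda>\<close>: \<open>c\<close> is linear and \<open>d\<close> is affine in \<open>\<Delta>\<close> with a
positive intercept, which rules out the sign ambiguity in recovering \<open>(c\<surd>\<lambda>, d\<surd>\<lambda>)\<close>.

The inverse square root is well defined by the spectral theorem, proved by maximizing the
Rayleigh quotient on invariant subspaces.\<close>

section \<open>Matrix inverses and positive definite matrices\<close>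

lemma matrix_inv_right:
  fixes A :: "'a::field^'n^'n"
  assumes "invertible A"
  shows "A ** matrix_inv A = mat 1"
  using someI_ex[OF assms[unfolded invertible_def]] by (simp add: matrix_inv_def)

lemma matrix_inv_left:
  fixes A :: "'a::field^'n^'n"
  assumes "invertible A"
  shows "matrix_inv A ** A = mat 1"
  using matrix_inv_right[OF assms] matrix_left_right_inverse by blast

lemma matrix_inv_unique:
  fixes A B :: "'a::field^'n^'n"
  assumes "A ** B = mat 1"
  shows "matrix_inv A = B"
proof -
  have "invertible A" using assms invertible_right_inverse by blast
  have "matrix_inv A = matrix_inv A ** (A ** B)" using assms by simp
  also have "\<dots> = (matrix_inv A ** A) ** B" by (simp add: matrix_mul_assoc)
  finally show ?thesis by (simp add: matrix_inv_left \<open>invertible A\<close>)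
qed

lemma invertible_matrix_inv:
  fixes A :: "'a::field^'n^'n"
  assumes "invertible A"
  shows "invertible (matrix_inv A)"
  using matrix_inv_left[OF assms] invertible_right_inverse by blast

lemma inner_matrix_vector_transpose:
  fixes A :: "real^'n^'m"
  shows "(A *v x) \<bullet> y = x \<bullet> (transpose A *v y)"
  by (metis dot_lmul_matrix inner_commute transpose_matrix_vector)

lemma inner_matrix_vector_symmetric:
  fixes A :: "real^'n^'n"
  assumes "transpose A = A"
  shows "x \<bullet> (A *v y) = (A *v x) \<bullet> y"
  by (metis assms inner_matrix_vector_transpose)

lemma pos_def_mat_symmetric: "pos_def_mat A \<Longrightarrow> transpose A = A"
  by (simp add: pos_def_mat_def)

lemma pos_def_mat_invertible:
  fixes A :: "real^'n^'n"
  assumes "pos_def_mat A"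
  shows "invertible A"
proof -
  have "x = 0" if "A *v x = 0" for x
    using assms that unfolding pos_def_mat_def by force
  then show ?thesis using matrix_left_invertible_ker invertible_left_inverse by blast
qed

lemma pos_def_mat_matrix_inv:
  fixes A :: "real^'n^'n"
  assumes "pos_def_mat A"
  shows "pos_def_mat (matrix_inv A)"
proof -
  have inv: "invertible A" using assms by (rule pos_def_mat_invertible)
  have "transpose (matrix_inv A) ** A = transpose (A ** matrix_inv A)"
    using pos_def_mat_symmetric[OF assms] by (metis matrix_transpose_mul)
  then have "transpose (matrix_inv A) ** A = mat 1"
    by (simp add: matrix_inv_right[OF inv])
  then have sym: "transpose (matrix_inv A) = matrix_inv A"
    by (metis matrix_inv_unique matrix_left_right_inverse)
  have "0 < x \<bullet> (matrix_inv A *v x)" if "x \<noteq> 0" for x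
  proof -
    define y where "y = matrix_inv A *v x"
    have "A *v y = x"
      by (simp add: y_def matrix_vector_mul_assoc matrix_inv_right[OF inv])
    then have "y \<noteq> 0" and "x \<bullet> (matrix_inv A *v x) = y \<bullet> (A *v y)"
      using that by (auto simp: y_def inner_commute)
    then show ?thesis using assms unfolding pos_def_mat_def by simp
  qed
  then show ?thesis using sym unfolding pos_def_mat_def by blast
qed

lemma pos_def_mat_congruence:
  fixes \<Phi> g :: "real^'n^'n"
  assumes "pos_def_mat \<Phi>" and "invertible g"
  shows "pos_def_mat (g ** \<Phi> ** transpose g)"
  unfolding pos_def_mat_def
proof (intro conjI allI impI)
  show "transpose (g ** \<Phi> ** transpose g) = g ** \<Phi> ** transpose g"
    using pos_def_mat_symmetric[OF assms(1)] by (simp add: matrix_transpose_mul matrix_mul_assoc)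
  fix x :: "real^'n" assume "x \<noteq> 0"
  moreover have "invertible (transpose g)"
    using assms(2) by (simp add: transpose_invertible)
  ultimately have "transpose g *v x \<noteq> 0"
    by (metis inj_matrix_vector_mult matrix_vector_mult_0_right injD)
  then have "0 < (transpose g *v x) \<bullet> (\<Phi> *v (transpose g *v x))"
    using assms(1) pos_def_mat_def by blast
  also have "\<dots> = x \<bullet> ((g ** \<Phi> ** transpose g) *v x)"
    by (simp add: inner_matrix_vector_transpose matrix_vector_mul_assoc matrix_mul_assoc
        del: transpose_matrix_vector)
  finally show "0 < x \<bullet> ((g ** \<Phi> ** transpose g) *v x)" .
qed

lemma matrix_inv_congruence:
  fixes \<Phi> g :: "real^'n^'n"
  assumes "invertible \<Phi>" and "invertible g"
  shows "matrix_inv (g ** \<Phi> ** transpose g) = transpose (matrix_inv g) ** matrix_inv \<Phi> ** matrix_inv g"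
proof (rule matrix_inv_unique)
  have gt: "transpose g ** transpose (matrix_inv g) = mat 1"
    by (metis matrix_inv_left[OF assms(2)] matrix_transpose_mul transpose_mat)
  have "g ** \<Phi> ** transpose g ** (transpose (matrix_inv g) ** matrix_inv \<Phi> ** matrix_inv g)
      = g ** (\<Phi> ** (transpose g ** transpose (matrix_inv g)) ** matrix_inv \<Phi>) ** matrix_inv g"
    by (simp add: matrix_mul_assoc)
  also have "\<dots> = mat 1"
    by (simp add: gt matrix_inv_right assms)
  finally show "g ** \<Phi> ** transpose g ** (transpose (matrix_inv g) ** matrix_inv \<Phi> ** matrix_inv g) = mat 1" .
qed

lemma inner_matrix_inv_congruence:
  fixes \<Phi> g :: "real^'n^'n"
  assumes "invertible \<Phi>" and "invertible g"
  shows "(g *v x) \<bullet> (matrix_inv (g ** \<Phi> ** transpose g) *v (g *v y)) = x \<bullet> (matrix_inv \<Phi> *v y)"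
proof -
  let ?G = "matrix_inv g"
  have "(g *v x) \<bullet> (matrix_inv (g ** \<Phi> ** transpose g) *v (g *v y))
      = x \<bullet> ((transpose g ** (transpose ?G ** matrix_inv \<Phi> ** ?G) ** g) *v y)"
    by (simp add: matrix_inv_congruence assms inner_matrix_vector_transpose matrix_vector_mul_assoc
        matrix_mul_assoc del: transpose_matrix_vector)
  also have "transpose g ** (transpose ?G ** matrix_inv \<Phi> ** ?G) ** g
      = transpose (?G ** g) ** matrix_inv \<Phi> ** (?G ** g)"
    by (simp add: matrix_transpose_mul matrix_mul_assoc)
  finally show ?thesis by (simp add: matrix_inv_left assms)
qed

section \<open>Spectral theorem and positive definite square roots\<close>

lemma linear_coeff_zero_if_quadratic_nonneg:
  fixes a b :: real
  assumes "\<And>t. 0 \<le> a * t + b * t\<^sup>2"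
  shows "a = 0"
proof (rule ccontr)
  assume "a \<noteq> 0"
  define s where "s = 1 / (\<bar>b\<bar> + 1)"
  have "s > 0" and "b * s < 1"
    by (auto simp: s_def field_simps)
  then have "a\<^sup>2 * s * (b * s - 1) < 0"
    using \<open>a \<noteq> 0\<close> by (simp add: mult_pos_neg)
  moreover have "a * (- a * s) + b * (- a * s)\<^sup>2 = a\<^sup>2 * s * (b * s - 1)"
    by (simp add: power2_eq_square algebra_simps)
  ultimately show False using assms[of "- a * s"] by linarith
qed

lemma rayleigh_quotient_attains_max:
  fixes A :: "real^'n^'n"
  assumes "subspace S" and "S \<noteq> {0}"
  obtains v where "v \<in> S" "norm v = 1" "\<And>x. x \<in> S \<Longrightarrow> x \<bullet> (A *v x) \<le> (v \<bullet> (A *v v)) * (x \<bullet> x)"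
proof -
  define K where "K = S \<inter> sphere 0 1"
  obtain x0 where "x0 \<in> S" "x0 \<noteq> 0" using assms subspace_0 by blast
  then have "x0 /\<^sub>R norm x0 \<in> K"
    using assms(1) by (simp add: K_def subspace_scale)
  moreover have "compact K"
    unfolding K_def using closed_subspace[OF assms(1)] by (simp add: closed_Int_compact)
  moreover have "continuous_on K (\<lambda>x. x \<bullet> (A *v x))"
    by (intro continuous_intros linear_continuous_on matrix_vector_mul_linear)
  ultimately obtain v where v: "v \<in> K" and vmax: "\<And>y. y \<in> K \<Longrightarrow> y \<bullet> (A *v y) \<le> v \<bullet> (A *v v)"
    using continuous_attains_sup[of K] by blast
  have "x \<bullet> (A *v x) \<le> (v \<bullet> (A *v v)) * (x \<bullet> x)" if "x \<in> S" for x
  proof (cases "x = 0")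
    case False
    then have "x /\<^sub>R norm x \<in> K"
      using that assms(1) by (simp add: K_def subspace_scale)
    then have "(x /\<^sub>R norm x) \<bullet> (A *v (x /\<^sub>R norm x)) \<le> v \<bullet> (A *v v)" by (rule vmax)
    then show ?thesis
      using False by (simp add: matrix_vector_mult_scaleR field_simps flip: power2_norm_eq_inner)
        (simp add: power2_eq_square mult_ac)
  qed simp
  with v show ?thesis by (intro that) (auto simp: K_def)
qed

lemma rayleigh_maximizer_is_eigenvector:
  fixes A :: "real^'n^'n"
  assumes sym: "transpose A = A" and S: "subspace S" and inv: "\<forall>x\<in>S. A *v x \<in> S"
    and v: "v \<in> S" "v \<bullet> v = 1"
    and vmax: "\<And>x. x \<in> S \<Longrightarrow> x \<bullet> (A *v x) \<le> (v \<bullet> (A *v v)) * (x \<bullet> x)"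
  shows "A *v v = (v \<bullet> (A *v v)) *\<^sub>R v"
proof -
  define m where "m = v \<bullet> (A *v v)"
  define g where "g x = m * (x \<bullet> x) - x \<bullet> (A *v x)" for x
  define z where "z = m *\<^sub>R v - A *v v"
  have "z \<in> S" unfolding z_def using v inv S by (simp add: subspace_diff subspace_scale)
  have "g (v + t *\<^sub>R z) = g v + 2 * (m * (v \<bullet> z) - z \<bullet> (A *v v)) * t + g z * t\<^sup>2" for t
    using inner_matrix_vector_symmetric[OF sym, of v z]
    by (simp add: g_def matrix_vector_right_distrib
        matrix_vector_mult_scaleR power2_eq_square algebra_simps inner_commute)
  moreover have "g v = 0" using v(2) by (simp add: g_def m_def)
  moreover have "m * (v \<bullet> z) - z \<bullet> (A *v v) = z \<bullet> z"
    using v(2) unfolding z_def m_def by (simp add: inner_diff_left inner_diff_right inner_commute algebra_simps)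
  ultimately have "g (v + t *\<^sub>R z) = 2 * (z \<bullet> z) * t + g z * t\<^sup>2" for t by simp
  moreover have "0 \<le> g (v + t *\<^sub>R z)" for t
    using vmax[of "v + t *\<^sub>R z"] v(1) \<open>z \<in> S\<close> S by (simp add: g_def m_def subspace_add subspace_scale)
  ultimately have "2 * (z \<bullet> z) = 0"
    by (intro linear_coeff_zero_if_quadratic_nonneg[of _ "g z"]) simp
  then show ?thesis by (simp add: z_def m_def)
qed

lemma symmetric_matrix_has_eigenvector_in_invariant_subspace:
  fixes A :: "real^'n^'n"
  assumes "transpose A = A" and "subspace S" and "\<forall>x\<in>S. A *v x \<in> S" and "S \<noteq> {0}"
  obtains v l where "v \<in> S" "norm v = 1" "A *v v = l *\<^sub>R v"
proof -
  obtain v where "v \<in> S" "norm v = 1" "\<And>x. x \<in> S \<Longrightarrow> x \<bullet> (A *v x) \<le> (v \<bullet> (A *v v)) * (x \<bullet> x)"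
    using rayleigh_quotient_attains_max[OF assms(2,4)] by blast
  with rayleigh_maximizer_is_eigenvector[OF assms(1-3)] that show ?thesis
    by (metis norm_eq_1)
qed

lemma orthogonal_complement_in_subspace:
  fixes v :: "'a::euclidean_space"
  assumes "subspace S" and "v \<in> S" and "v \<noteq> 0"
  shows "subspace (S \<inter> {x. orthogonal v x})" and "dim (S \<inter> {x. orthogonal v x}) < dim S"
proof -
  let ?S' = "S \<inter> {x. orthogonal v x}"
  show "subspace ?S'"
    by (intro subspace_inter assms(1) subspace_orthogonal_to_vector)
  have "v \<notin> ?S'" using assms(3) by (simp add: orthogonal_def)
  then have "v \<notin> span ?S'" using \<open>subspace ?S'\<close> by (metis span_eq_iff)
  moreover have "dim (insert v ?S') \<le> dim S"
    using assms(2) by (intro dim_mono) (auto intro: span_base)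
  ultimately show "dim ?S' < dim S" by (simp add: dim_insert)
qed

lemma symmetric_matrix_orthonormal_eigenbasis_subspace:
  fixes A :: "real^'n^'n"
  assumes sym: "transpose A = A"
  shows "subspace S \<Longrightarrow> \<forall>x\<in>S. A *v x \<in> S \<Longrightarrow>
    \<exists>B. B \<subseteq> S \<and> pairwise orthogonal B \<and> (\<forall>b\<in>B. norm b = 1 \<and> (\<exists>l. A *v b = l *\<^sub>R b))
        \<and> span B = S"
proof (induction "dim S" arbitrary: S rule: less_induct)
  case less
  show ?case
  proof (cases "S = {0}")
    case True
    then show ?thesis by (intro exI[of _ "{}"]) auto
  next
    case False
    obtain v l where v: "v \<in> S" "norm v = 1" "A *v v = l *\<^sub>R v"
      using symmetric_matrix_has_eigenvector_in_invariant_subspace[OF sym less.prems False] .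
    define S' where "S' = S \<inter> {x. orthogonal v x}"
    have "v \<noteq> 0" using v(2) by auto
    then have "subspace S'" "dim S' < dim S"
      using orthogonal_complement_in_subspace[OF less.prems(1) v(1)] by (simp_all add: S'_def)
    moreover have "\<forall>x\<in>S'. A *v x \<in> S'"
      using less.prems(2) v(3) inner_matrix_vector_symmetric[OF sym, of v]
      by (auto simp: S'_def orthogonal_def)
    ultimately obtain B' where B': "B' \<subseteq> S'" "pairwise orthogonal B'"
      "\<forall>b\<in>B'. norm b = 1 \<and> (\<exists>l. A *v b = l *\<^sub>R b)" "span B' = S'"
      using less.hyps by blast
    have "S \<subseteq> span (insert v B')"
    proof
      fix x assume "x \<in> S"
      then have "x - (v \<bullet> x) *\<^sub>R v \<in> span B'"
        using B'(4) v less.prems(1)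
        by (simp add: S'_def subspace_diff subspace_scale orthogonal_def inner_diff_right norm_eq_1)
      then show "x \<in> span (insert v B')" using span_breakdown_eq by blast
    qed
    moreover have "insert v B' \<subseteq> S" using B'(1) v(1) by (auto simp: S'_def)
    ultimately have "span (insert v B') = S"
      using less.prems(1) by (simp add: span_minimal subset_antisym)
    moreover have "pairwise orthogonal (insert v B')"
      using B'(1,2) by (auto simp: S'_def pairwise_insert orthogonal_commute)
    ultimately show ?thesis
      using B'(1,3) v by (intro exI[of _ "insert v B'"]) (auto simp: S'_def)
  qed
qed

lemma symmetric_matrix_orthonormal_eigenbasis:
  fixes A :: "real^'n^'n"
  assumes "transpose A = A"
  obtains B where "finite B" "pairwise orthogonal B" "\<And>b. b \<in> B \<Longrightarrow> norm b = 1"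
    "\<And>b. b \<in> B \<Longrightarrow> A *v b = (b \<bullet> (A *v b)) *\<^sub>R b" "span B = UNIV"
proof -
  obtain B where B: "pairwise orthogonal B" "\<forall>b\<in>B. norm b = 1 \<and> (\<exists>l. A *v b = l *\<^sub>R b)"
    "span B = UNIV"
    using symmetric_matrix_orthonormal_eigenbasis_subspace[OF assms, of UNIV] by auto
  have "finite B"
    using B(1,2) pairwise_orthogonal_independent independent_imp_finite by fastforce
  moreover have "A *v b = (b \<bullet> (A *v b)) *\<^sub>R b" if "b \<in> B" for b
    using B(2) that by (auto simp: norm_eq_1)
  ultimately show ?thesis using B that by blast
qed

definition spectral_mat :: "(real^'n \<Rightarrow> real) \<Rightarrow> (real^'n) set \<Rightarrow> real^'n^'n" where
  "spectral_mat s B = (\<chi> i j. \<Sum>b\<in>B. s b * b$i * b$j)"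

lemma spectral_mat_mult_vector: "spectral_mat s B *v x = (\<Sum>b\<in>B. (s b * (b \<bullet> x)) *\<^sub>R b)"
  unfolding spectral_mat_def
  by (simp add: vec_eq_iff matrix_vector_mult_def inner_vec_def sum_distrib_left sum_distrib_right
      sum_component mult_ac sum.swap[of _ UNIV])

lemma spectral_mat_eigenvector:
  assumes "finite B" "pairwise orthogonal B" "\<And>b. b \<in> B \<Longrightarrow> norm b = 1" and "b \<in> B"
  shows "spectral_mat s B *v b = s b *\<^sub>R b"
proof -
  have "spectral_mat s B *v b = (\<Sum>b'\<in>B. if b' = b then s b *\<^sub>R b else 0)"
    unfolding spectral_mat_mult_vector using assms(2-4)
    by (intro sum.cong) (auto simp: pairwise_def orthogonal_def norm_eq_1)
  then show ?thesis using assms(1,4) by (simp add: sum.delta')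
qed

lemma pos_def_mat_spectral_mat:
  fixes B :: "(real^'n) set"
  assumes "finite B" and "span B = UNIV" and "\<And>b. b \<in> B \<Longrightarrow> s b > 0"
  shows "pos_def_mat (spectral_mat s B)"
  unfolding pos_def_mat_def
proof (intro conjI allI impI)
  show "transpose (spectral_mat s B) = spectral_mat s B"
    by (simp add: spectral_mat_def vec_eq_iff transpose_def mult_ac)
  fix x :: "real^'n" assume "x \<noteq> 0"
  then obtain b0 where b0: "b0 \<in> B" "b0 \<bullet> x \<noteq> 0"
    using orthogonal_to_span[of x B x] assms(2) by (auto simp: orthogonal_def inner_commute)
  have "0 < (\<Sum>b\<in>B. s b * (b \<bullet> x)\<^sup>2)"
    using b0 assms(3) by (intro sum_pos2[OF assms(1) b0(1)]) (auto simp: less_imp_le)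
  also have "\<dots> = x \<bullet> (spectral_mat s B *v x)"
    by (simp add: spectral_mat_mult_vector inner_sum_right power2_eq_square inner_commute mult_ac)
  finally show "0 < x \<bullet> (spectral_mat s B *v x)" .
qed

lemma pos_def_mat_sqrt_exists:
  fixes C :: "real^'n^'n"
  assumes pd: "pos_def_mat C"
  shows "\<exists>M. pos_def_mat M \<and> M ** M = C"
proof -
  obtain B where B: "finite B" "pairwise orthogonal B" "\<And>b. b \<in> B \<Longrightarrow> norm b = 1"
    and eig: "\<And>b. b \<in> B \<Longrightarrow> C *v b = (b \<bullet> (C *v b)) *\<^sub>R b" and sp: "span B = UNIV"
    using symmetric_matrix_orthonormal_eigenbasis[OF pos_def_mat_symmetric[OF pd]] by blast
  define s where "s b = sqrt (b \<bullet> (C *v b))" for b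
  define M where "M = spectral_mat s B"
  have s_pos: "s b > 0" if "b \<in> B" for b
    using pd B(3)[OF that] by (auto simp: s_def pos_def_mat_def dest!: spec[of _ b])
  then have "pos_def_mat M"
    unfolding M_def using B(1) sp by (rule pos_def_mat_spectral_mat[rotated 2])
  moreover have "(M ** M) *v x = C *v x" for x
  proof (rule linear_eq_on_span[OF matrix_vector_mul_linear matrix_vector_mul_linear])
    show "x \<in> span B" using sp by simp
    fix b assume "b \<in> B"
    then have "s b * s b = b \<bullet> (C *v b)" using s_pos[OF \<open>b \<in> B\<close>] by (simp add: s_def)
    with \<open>b \<in> B\<close> show "(M ** M) *v b = C *v b"
      using spectral_mat_eigenvector[OF B] eig
      by (simp add: M_def matrix_vector_mul_assoc[symmetric] matrix_vector_mult_scaleR)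
  qed
  ultimately show ?thesis by (metis matrix_eq)
qed

lemma pos_def_mat_sqrt_eigenvector:
  fixes N :: "real^'n^'n"
  assumes "pos_def_mat N" and "(N ** N) *v b = (s * s) *\<^sub>R b" and "s > 0"
  shows "N *v b = s *\<^sub>R b"
proof (rule ccontr)
  define y where "y = N *v b - s *\<^sub>R b"
  assume "N *v b \<noteq> s *\<^sub>R b"
  \<comment> \<open>\<open>(N + s) (N - s) b = 0\<close>, but \<open>N + s\<close> is positive definite\<close>
  then have "0 < y \<bullet> (N *v y)" "0 < y \<bullet> y"
    using assms(1) by (auto simp: y_def pos_def_mat_def)
  moreover have "N *v y + s *\<^sub>R y = 0"
    using assms(2) by (simp add: y_def matrix_vector_mult_diff_distrib matrix_vector_mult_scaleR
        matrix_vector_mul_assoc algebra_simps)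
  then have "y \<bullet> (N *v y) + s * (y \<bullet> y) = 0"
    by (metis inner_add_right inner_scaleR_right inner_zero_right)
  ultimately show False using \<open>s > 0\<close> by (smt (verit) mult_pos_pos)
qed

lemma pos_def_mat_sqrt_unique:
  fixes M N :: "real^'n^'n"
  assumes "pos_def_mat M" "pos_def_mat N" and "M ** M = N ** N"
  shows "M = N"
proof -
  have "transpose (M ** M) = M ** M"
    using pos_def_mat_symmetric[OF assms(1)] by (simp add: matrix_transpose_mul)
  then obtain B where unit: "\<And>b. b \<in> B \<Longrightarrow> norm b = 1"
    and eig: "\<And>b. b \<in> B \<Longrightarrow> (M ** M) *v b = (b \<bullet> ((M ** M) *v b)) *\<^sub>R b" and sp: "span B = UNIV"
    using symmetric_matrix_orthonormal_eigenbasis by metis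
  have "M *v x = N *v x" for x
  proof (rule linear_eq_on_span[OF matrix_vector_mul_linear matrix_vector_mul_linear])
    show "x \<in> span B" using sp by simp
    fix b assume "b \<in> B"
    define s where "s = sqrt (b \<bullet> ((M ** M) *v b))"
    have "b \<bullet> ((M ** M) *v b) = (M *v b) \<bullet> (M *v b)"
      using inner_matrix_vector_symmetric[OF pos_def_mat_symmetric[OF assms(1)]]
      by (simp add: matrix_vector_mul_assoc[symmetric])
    moreover have "M *v b \<noteq> 0"
      using \<open>b \<in> B\<close> unit pos_def_mat_invertible[OF assms(1)]
      by (metis inj_matrix_vector_mult injD matrix_vector_mult_0_right norm_zero zero_neq_one)
    ultimately have "s > 0" and "(M ** M) *v b = (s * s) *\<^sub>R b"
      using eig[OF \<open>b \<in> B\<close>] by (auto simp: s_def)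
    then show "M *v b = N *v b"
      using assms pos_def_mat_sqrt_eigenvector by metis
  qed
  then show ?thesis by (simp add: matrix_eq)
qed

lemma inv_sqrt_mat_spec:
  fixes \<Phi> :: "real^'n^'n"
  assumes "pos_def_mat \<Phi>"
  shows "pos_def_mat (inv_sqrt_mat \<Phi>)" and "inv_sqrt_mat \<Phi> ** inv_sqrt_mat \<Phi> = matrix_inv \<Phi>"
proof -
  have "\<exists>!M. pos_def_mat M \<and> M ** M = matrix_inv \<Phi>"
    using pos_def_mat_sqrt_exists pos_def_mat_sqrt_unique pos_def_mat_matrix_inv[OF assms] by metis
  then have "pos_def_mat (inv_sqrt_mat \<Phi>) \<and> inv_sqrt_mat \<Phi> ** inv_sqrt_mat \<Phi> = matrix_inv \<Phi>"
    unfolding inv_sqrt_mat_def by (rule theI')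
  then show "pos_def_mat (inv_sqrt_mat \<Phi>)" "inv_sqrt_mat \<Phi> ** inv_sqrt_mat \<Phi> = matrix_inv \<Phi>"
    by auto
qed

lemma invertible_inv_sqrt_mat: "pos_def_mat \<Phi> \<Longrightarrow> invertible (inv_sqrt_mat \<Phi>)"
  by (simp add: inv_sqrt_mat_spec pos_def_mat_invertible)

lemma inner_inv_sqrt_mat:
  fixes \<Phi> :: "real^'n^'n"
  assumes "pos_def_mat \<Phi>"
  shows "(inv_sqrt_mat \<Phi> *v x) \<bullet> (inv_sqrt_mat \<Phi> *v y) = x \<bullet> (matrix_inv \<Phi> *v y)"
  using inv_sqrt_mat_spec[OF assms] inner_matrix_vector_symmetric[OF pos_def_mat_symmetric]
  by (metis matrix_vector_mul_assoc)

lemma inv_sqrt_mat_whitens: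
  fixes \<Phi> :: "real^'n^'n"
  assumes "pos_def_mat \<Phi>"
  shows "inv_sqrt_mat \<Phi> ** \<Phi> ** transpose (inv_sqrt_mat \<Phi>) = mat 1"
proof -
  let ?M = "inv_sqrt_mat \<Phi>"
  have "?M ** (?M ** \<Phi>) = mat 1"
    using inv_sqrt_mat_spec(2)[OF assms] matrix_inv_left[OF pos_def_mat_invertible[OF assms]]
    by (simp add: matrix_mul_assoc)
  then have "?M ** \<Phi> ** ?M = mat 1"
    by (simp add: matrix_left_right_inverse)
  then show ?thesis by (simp add: pos_def_mat_symmetric inv_sqrt_mat_spec(1)[OF assms])
qed

section \<open>Congruence classes of positive definite matrices with two vectors\<close>

lemma congruence_of_whitened:
  fixes W W' U \<Phi> \<Phi>' :: "real^'n^'n"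
  assumes "invertible W'" and "orthogonal_matrix U"
    and "W ** \<Phi> ** transpose W = mat 1" and "W' ** \<Phi>' ** transpose W' = mat 1"
  shows "(matrix_inv W' ** U ** W) ** \<Phi> ** transpose (matrix_inv W' ** U ** W) = \<Phi>'"
proof -
  let ?V = "matrix_inv W'"
  have tV: "transpose W' ** transpose ?V = mat 1"
    by (metis matrix_inv_left[OF assms(1)] matrix_transpose_mul transpose_mat)
  have "(?V ** U ** W) ** \<Phi> ** transpose (?V ** U ** W)
      = ?V ** U ** (W ** \<Phi> ** transpose W) ** transpose U ** transpose ?V"
    by (simp add: matrix_transpose_mul matrix_mul_assoc)
  also have "\<dots> = ?V ** (U ** transpose U) ** transpose ?V"
    using assms(3) by (simp add: matrix_mul_assoc)
  also have "\<dots> = ?V ** transpose ?V"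
    using assms(2) by (simp add: orthogonal_matrix_def)
  also have "\<dots> = ?V ** (W' ** \<Phi>' ** transpose W') ** transpose ?V"
    using assms(4) by simp
  also have "\<dots> = (?V ** W') ** \<Phi>' ** (transpose W' ** transpose ?V)"
    by (simp add: matrix_mul_assoc)
  also have "\<dots> = \<Phi>'"
    by (simp add: tV matrix_inv_left[OF assms(1)])
  finally show ?thesis .
qed

lemma orthogonal_matrix_exists_pair:
  fixes a1 a2 b1 b2 :: "real^'n"
  assumes "a1 \<bullet> a1 = b1 \<bullet> b1" and "a1 \<bullet> a2 = b1 \<bullet> b2" and "a2 \<bullet> a2 = b2 \<bullet> b2"
  obtains U where "orthogonal_matrix U" "U *v a1 = b1" "U *v a2 = b2"
proof -
  obtain f where f: "orthogonal_transformation f" "f a1 = b1"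
    using orthogonal_transformation_exists assms(1) by (metis norm_eq_sqrt_inner)
  define c where "c = f a2"
  have "f v \<bullet> f w = v \<bullet> w" for v w
    using f(1) by (simp add: orthogonal_transformation_def)
  then have "c \<bullet> b1 = b2 \<bullet> b1" and "c \<bullet> c = b2 \<bullet> b2"
    using f(2) assms(2,3) by (metis c_def inner_commute)+
  \<comment> \<open>the reflection in the hyperplane orthogonal to c - b2 fixes b1 and swaps c and b2\<close>
  define z where "z = c - b2"
  define H where "H x = x - (2 * (z \<bullet> x) / (z \<bullet> z)) *\<^sub>R z" for x
  have "orthogonal_transformation H"
    unfolding orthogonal_transformation_def
  proof
    show "linear H"
      by (rule linearI) (simp_all add: H_def inner_add_right algebra_simps add_divide_distrib)
    show "\<forall>v w. H v \<bullet> H w = v \<bullet> w"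
      by (cases "z = 0") (simp_all add: H_def inner_diff_left inner_diff_right inner_commute
          field_simps power2_eq_square)
  qed
  moreover have "H b1 = b1"
    using \<open>c \<bullet> b1 = b2 \<bullet> b1\<close> by (simp add: H_def z_def inner_diff_left)
  moreover have "H c = b2"
  proof (cases "z = 0")
    case True
    then show ?thesis by (simp add: H_def z_def)
  next
    case False
    have "z \<bullet> z = 2 * (z \<bullet> c)"
      using \<open>c \<bullet> c = b2 \<bullet> b2\<close>
      by (simp add: z_def inner_diff_left inner_diff_right inner_commute algebra_simps)
    moreover have "z \<bullet> z \<noteq> 0" using False by simp
    ultimately have "2 * (z \<bullet> c) / (z \<bullet> z) = 1" by (metis divide_self)
    then have "H c = c - z" by (simp only: H_def scaleR_one)
    then show ?thesis by (simp add: z_def)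
  qed
  ultimately have "orthogonal_transformation (H \<circ> f)" "(H \<circ> f) a1 = b1" "(H \<circ> f) a2 = b2"
    using f by (simp_all add: orthogonal_transformation_compose c_def)
  then show ?thesis
    using that[of "matrix (H \<circ> f)"] orthogonal_transformation_matrix[of "H \<circ> f"]
    by (simp add: matrix_vector_mul(2))
qed

lemma congruence_exists_if_equal_gram:
  fixes \<Phi> \<Phi>' :: "real^'n^'n" and x1 x2 y1 y2 :: "real^'n"
  assumes pd: "pos_def_mat \<Phi>" and pd': "pos_def_mat \<Phi>'"
    and "x1 \<bullet> (matrix_inv \<Phi> *v x1) = y1 \<bullet> (matrix_inv \<Phi>' *v y1)"
    and "x1 \<bullet> (matrix_inv \<Phi> *v x2) = y1 \<bullet> (matrix_inv \<Phi>' *v y2)"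
    and "x2 \<bullet> (matrix_inv \<Phi> *v x2) = y2 \<bullet> (matrix_inv \<Phi>' *v y2)"
  obtains g where "invertible g" "g *v x1 = y1" "g *v x2 = y2" "g ** \<Phi> ** transpose g = \<Phi>'"
proof -
  let ?M = "inv_sqrt_mat \<Phi>" and ?M' = "inv_sqrt_mat \<Phi>'"
  obtain U where U: "orthogonal_matrix U" "U *v (?M *v x1) = ?M' *v y1" "U *v (?M *v x2) = ?M' *v y2"
    by (rule orthogonal_matrix_exists_pair[of "?M *v x1" "?M' *v y1" "?M *v x2" "?M' *v y2"])
      (use assms(3-5) in \<open>simp_all add: inner_inv_sqrt_mat pd pd'\<close>)
  define g where "g = matrix_inv ?M' ** U ** ?M"
  have "invertible U"
    using U(1) by (auto simp: orthogonal_matrix_def invertible_def)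
  then have "invertible g"
    unfolding g_def by (intro invertible_mult invertible_matrix_inv invertible_inv_sqrt_mat pd pd')
  moreover have maps: "g *v x = y" if "U *v (?M *v x) = ?M' *v y" for x y
    using that matrix_inv_left[OF invertible_inv_sqrt_mat[OF pd']]
    by (simp add: g_def flip: matrix_vector_mul_assoc) (simp add: matrix_vector_mul_assoc)
  moreover have "g ** \<Phi> ** transpose g = \<Phi>'"
    unfolding g_def
    by (intro congruence_of_whitened U(1) invertible_inv_sqrt_mat inv_sqrt_mat_whitens pd pd')
  ultimately show ?thesis using that maps[OF U(2)] maps[OF U(3)] by simp
qed

section \<open>The sample space\<close>

lemma matrix_eq_if_eq_on_basis_2:
  fixes A B :: "real^2^'m" and u v :: "real^2"
  assumes "u$1 * v$2 \<noteq> u$2 * v$1" and "A *v u = B *v u" and "A *v v = B *v v"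
  shows "A = B"
proof -
  have span: "x \<in> span {u, v}" for x
  proof -
    define \<delta> where "\<delta> = u$1 * v$2 - u$2 * v$1"
    have "\<delta> *\<^sub>R x = (x$1 * v$2 - x$2 * v$1) *\<^sub>R u + (u$1 * x$2 - u$2 * x$1) *\<^sub>R v"
      unfolding vec_eq_iff forall_2 \<delta>_def by (simp add: algebra_simps)
    then have "\<delta> *\<^sub>R x \<in> span {u, v}"
      by (simp add: span_add span_scale span_base)
    then have "(1 / \<delta>) *\<^sub>R (\<delta> *\<^sub>R x) \<in> span {u, v}"
      by (rule span_scale)
    moreover have "\<delta> \<noteq> 0" using assms(1) by (simp add: \<delta>_def)
    ultimately show ?thesis by simp
  qed
  have "A *v x = B *v x" for x
  proof (rule linear_eq_on_span[OF matrix_vector_mul_linear matrix_vector_mul_linear])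
    show "x \<in> span {u, v}" by (rule span)
  qed (use assms(2,3) in auto)
  then show ?thesis by (simp add: matrix_eq)
qed

definition S_dir :: "real^2^2 \<Rightarrow> real^2" where
  "S_dir \<Omega>0 = (1 / sqrt (e1 \<bullet> (\<Omega>0 *v e1))) *\<^sub>R e1"

definition T_dir :: "real^2^2 \<Rightarrow> real^2" where
  "T_dir \<Omega>0 = (1 / sqrt (e2 \<bullet> (matrix_inv \<Omega>0 *v e2))) *\<^sub>R (matrix_inv \<Omega>0 *v e2)"

lemma S_stat_eq: "S_stat R0 \<Omega>0 \<Phi> = inv_sqrt_mat \<Phi> *v (R0 *v S_dir \<Omega>0)"
  by (simp add: S_stat_def S_dir_def matrix_vector_mult_scaleR)

lemma T_stat_eq: "T_stat R0 \<Omega>0 \<Phi> = inv_sqrt_mat \<Phi> *v (R0 *v T_dir \<Omega>0)"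
  by (simp add: T_stat_def T_dir_def matrix_vector_mult_scaleR)

lemma inner_e2: "e2 \<bullet> v = v$2"
  by (simp add: e2_def inner_vec_def sum_2)

lemma S_dir_nth:
  assumes "pos_def_mat \<Omega>0"
  shows "S_dir \<Omega>0 $ 1 > 0" and "S_dir \<Omega>0 $ 2 = 0"
proof -
  have "e1 \<noteq> 0" by (simp add: e1_def vec_eq_iff forall_2)
  then have "e1 \<bullet> (\<Omega>0 *v e1) > 0" using assms by (simp add: pos_def_mat_def)
  then show "S_dir \<Omega>0 $ 1 > 0" "S_dir \<Omega>0 $ 2 = 0" by (simp_all add: S_dir_def e1_def)
qed

lemma T_dir_nth_2:
  assumes "pos_def_mat \<Omega>0"
  shows "T_dir \<Omega>0 $ 2 > 0"
proof -
  have "e2 \<noteq> 0" by (simp add: e2_def vec_eq_iff forall_2)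
  then have "e2 \<bullet> (matrix_inv \<Omega>0 *v e2) > 0"
    using pos_def_mat_matrix_inv[OF assms] by (simp add: pos_def_mat_def)
  then show ?thesis by (simp add: T_dir_def inner_e2 divide_pos_pos)
qed

lemma Q_stat_nth:
  "Q_stat R0 \<Omega>0 \<Phi> $ i $ j =
     (if i = 1 then S_stat R0 \<Omega>0 \<Phi> else T_stat R0 \<Omega>0 \<Phi>) \<bullet> (if j = 1 then S_stat R0 \<Omega>0 \<Phi> else T_stat R0 \<Omega>0 \<Phi>)"
  unfolding Q_stat_def Let_def
  using exhaust_2[of i] exhaust_2[of j]
  by (auto simp: matrix_matrix_mult_def transpose_def inner_vec_def)

lemma Q_stat_eq_iff:
  fixes \<Phi> \<Phi>' :: "real^'k^'k" and \<Omega>0 :: "real^2^2"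
  assumes "pos_def_mat \<Phi>" and "pos_def_mat \<Phi>'"
  defines "u \<equiv> S_dir \<Omega>0" and "v \<equiv> T_dir \<Omega>0"
  shows "Q_stat R0 \<Omega>0 \<Phi> = Q_stat R0' \<Omega>0 \<Phi>' \<longleftrightarrow>
    (R0 *v u) \<bullet> (matrix_inv \<Phi> *v (R0 *v u)) = (R0' *v u) \<bullet> (matrix_inv \<Phi>' *v (R0' *v u)) \<and>
    (R0 *v u) \<bullet> (matrix_inv \<Phi> *v (R0 *v v)) = (R0' *v u) \<bullet> (matrix_inv \<Phi>' *v (R0' *v v)) \<and>
    (R0 *v v) \<bullet> (matrix_inv \<Phi> *v (R0 *v v)) = (R0' *v v) \<bullet> (matrix_inv \<Phi>' *v (R0' *v v))"
  using assms(1,2)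
  by (simp add: vec_eq_iff forall_2 Q_stat_nth inner_commute S_stat_eq T_stat_eq inner_inv_sqrt_mat u_def v_def)

lemma Q_stat_congruence:
  fixes g \<Phi> :: "real^'k^'k"
  assumes "pos_def_mat \<Phi>" and "invertible g"
  shows "Q_stat (g ** R0) \<Omega>0 (g ** \<Phi> ** transpose g) = Q_stat R0 \<Omega>0 \<Phi>"
  using assms pos_def_mat_congruence[OF assms]
  by (simp add: Q_stat_eq_iff inner_matrix_inv_congruence pos_def_mat_invertible
      flip: matrix_vector_mul_assoc)

lemma Q_stat_eq_imp_congruent:
  fixes \<Phi> \<Phi>' :: "real^'k^'k"
  assumes "pos_def_mat \<Phi>" "pos_def_mat \<Phi>'" "pos_def_mat \<Omega>0"
    and "Q_stat R0 \<Omega>0 \<Phi> = Q_stat R0' \<Omega>0 \<Phi>'"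
  obtains g where "invertible g" "g ** R0 = R0'" "g ** \<Phi> ** transpose g = \<Phi>'"
proof -
  let ?u = "S_dir \<Omega>0" and ?v = "T_dir \<Omega>0"
  obtain g where g: "invertible g" "g *v (R0 *v ?u) = R0' *v ?u" "g *v (R0 *v ?v) = R0' *v ?v"
    "g ** \<Phi> ** transpose g = \<Phi>'"
    using congruence_exists_if_equal_gram[OF assms(1,2)] assms(4)
    unfolding Q_stat_eq_iff[OF assms(1,2)] by metis
  have "?u $ 1 * ?v $ 2 \<noteq> ?u $ 2 * ?v $ 1"
    using S_dir_nth[OF assms(3)] T_dir_nth_2[OF assms(3)] by simp
  then have "g ** R0 = R0'"
    by (rule matrix_eq_if_eq_on_basis_2) (simp_all add: g(2,3) flip: matrix_vector_mul_assoc)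
  with g(1,4) that show ?thesis by blast
qed

lemma sample_maximal_invariant:
  "maximal_invariant {g1 :: real^'k^'k. invertible g1} sample_act
     (sample_space :: ((real^2^'k) \<times> (real^2^2) \<times> (real^'k^'k)) set)
     (\<lambda>(R0, \<Omega>0, \<Phi>). (Q_stat R0 \<Omega>0 \<Phi>, \<Omega>0))"
  unfolding maximal_invariant_def
proof (intro conjI ballI impI)
  fix g :: "real^'k^'k" and x :: "(real^2^'k) \<times> (real^2^2) \<times> (real^'k^'k)"
  assume "g \<in> {g1. invertible g1}" and "x \<in> sample_space"
  then show "(case sample_act g x of (R0, \<Omega>0, \<Phi>) \<Rightarrow> (Q_stat R0 \<Omega>0 \<Phi>, \<Omega>0)) =
             (case x of (R0, \<Omega>0, \<Phi>) \<Rightarrow> (Q_stat R0 \<Omega>0 \<Phi>, \<Omega>0))"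
    by (auto simp: sample_act_def sample_space_def Q_stat_congruence)
next
  fix x y :: "(real^2^'k) \<times> (real^2^2) \<times> (real^'k^'k)"
  assume "x \<in> sample_space" "y \<in> sample_space"
    and "(case x of (R0, \<Omega>0, \<Phi>) \<Rightarrow> (Q_stat R0 \<Omega>0 \<Phi>, \<Omega>0)) =
         (case y of (R0, \<Omega>0, \<Phi>) \<Rightarrow> (Q_stat R0 \<Omega>0 \<Phi>, \<Omega>0))"
  then obtain R0 R0' \<Omega>0 \<Phi> \<Phi>' where xy: "x = (R0, \<Omega>0, \<Phi>)" "y = (R0', \<Omega>0, \<Phi>')"
    and pd: "pos_def_mat \<Phi>" "pos_def_mat \<Phi>'" "pos_def_mat \<Omega>0"
    and Q: "Q_stat R0 \<Omega>0 \<Phi> = Q_stat R0' \<Omega>0 \<Phi>'"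
    by (auto simp: sample_space_def)
  obtain g where "invertible g" "g ** R0 = R0'" "g ** \<Phi> ** transpose g = \<Phi>'"
    using Q_stat_eq_imp_congruent[OF pd Q] .
  then show "\<exists>g\<in>{g1. invertible g1}. y = sample_act g x"
    by (auto simp: xy sample_act_def)
qed

section \<open>The parameter space\<close>

lemma lambda_par_congruence:
  fixes g \<Phi> :: "real^'k^'k"
  assumes "pos_def_mat \<Phi>" and "invertible g"
  shows "lambda_par (g *v \<mu>) (g ** \<Phi> ** transpose g) = lambda_par \<mu> \<Phi>"
  using assms by (simp add: lambda_par_def inner_matrix_inv_congruence pos_def_mat_invertible)

lemma lambda_par_pos:
  assumes "pos_def_mat \<Phi>" and "\<mu> \<noteq> 0"
  shows "lambda_par \<mu> \<Phi> > 0"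
  using pos_def_mat_matrix_inv[OF assms(1)] assms(2) by (simp add: lambda_par_def pos_def_mat_def)

lemma sq_prod_eq_imp_eq_or_neg:
  fixes p q p' q' :: real
  assumes "p\<^sup>2 = p'\<^sup>2" and "p * q = p' * q'" and "q\<^sup>2 = q'\<^sup>2"
  shows "(p = p' \<and> q = q') \<or> (p = - p' \<and> q = - q')"
proof -
  have "p = p' \<or> p = - p'" and "q = q' \<or> q = - q'"
    using assms(1,3) by (simp_all add: power2_eq_iff)
  then show ?thesis
    using assms(2) by (cases "p = 0") auto
qed

lemma affine_scaling_injective:
  fixes \<alpha> \<beta> \<gamma> D D' l l' :: real
  assumes "\<alpha> \<noteq> 0" "\<gamma> > 0" "l > 0" "l' > 0"
    and "(\<alpha> * D)\<^sup>2 * l = (\<alpha> * D')\<^sup>2 * l'"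
    and "(\<alpha> * D) * (\<beta> * D + \<gamma>) * l = (\<alpha> * D') * (\<beta> * D' + \<gamma>) * l'"
    and "(\<beta> * D + \<gamma>)\<^sup>2 * l = (\<beta> * D' + \<gamma>)\<^sup>2 * l'"
  shows "D = D' \<and> l = l'"
proof -
  define r r' where "r = sqrt l" and "r' = sqrt l'"
  have r: "r > 0" "l = r\<^sup>2" and r': "r' > 0" "l' = r'\<^sup>2"
    using assms(3,4) by (simp_all add: r_def r'_def)
  define p q p' q' where "p = \<alpha> * D * r" and "q = (\<beta> * D + \<gamma>) * r"
    and "p' = \<alpha> * D' * r'" and "q' = (\<beta> * D' + \<gamma>) * r'"
  \<comment> \<open>q is affine in p with intercept \<gamma> r > 0, which excludes the sign flip\<close>
  have q: "q = \<beta> / \<alpha> * p + \<gamma> * r" and q': "q' = \<beta> / \<alpha> * p' + \<gamma> * r'"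
    using assms(1) by (simp_all add: p_def q_def p'_def q'_def field_simps)
  have "p\<^sup>2 = p'\<^sup>2" "p * q = p' * q'" "q\<^sup>2 = q'\<^sup>2"
    using assms(5-7) unfolding r(2) r'(2) p_def q_def p'_def q'_def
    by (simp_all add: power_mult_distrib power2_eq_square mult_ac)
  then consider "p = p'" "q = q'" | "p = - p'" "q = - q'"
    using sq_prod_eq_imp_eq_or_neg by blast
  then show ?thesis
  proof cases
    case 1
    then have "r = r'" using q q' assms(2) by simp
    then show ?thesis using 1 r r' assms(1) by (simp add: p_def p'_def)
  next
    case 2
    then have "\<gamma> * r = - (\<gamma> * r')" using q q' by (simp add: algebra_simps)
    then show ?thesis using assms(2) r r' by (smt (verit) mult_pos_pos)
  qed
qed

lemma c_par_eq: "c_par \<Delta> \<Omega>0 = S_dir \<Omega>0 $ 1 * \<Delta>"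
  by (simp add: c_par_def S_dir_def e1_def)

lemma d_par_eq: "d_par \<Delta> \<Omega>0 = T_dir \<Omega>0 $ 1 * \<Delta> + T_dir \<Omega>0 $ 2"
  by (simp add: d_par_def T_dir_def inner_vec_def sum_2 add_divide_distrib)

lemma c_d_lambda_injective:
  assumes "pos_def_mat \<Omega>0" and "l > 0" and "l' > 0"
    and "(c_par \<Delta> \<Omega>0)\<^sup>2 * l = (c_par \<Delta>' \<Omega>0)\<^sup>2 * l'"
    and "c_par \<Delta> \<Omega>0 * d_par \<Delta> \<Omega>0 * l = c_par \<Delta>' \<Omega>0 * d_par \<Delta>' \<Omega>0 * l'"
    and "(d_par \<Delta> \<Omega>0)\<^sup>2 * l = (d_par \<Delta>' \<Omega>0)\<^sup>2 * l'"
  shows "\<Delta> = \<Delta>' \<and> l = l'"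
proof -
  have "S_dir \<Omega>0 $ 1 \<noteq> 0" using S_dir_nth(1)[OF assms(1)] by simp
  then show ?thesis
    by (rule affine_scaling_injective[OF _ T_dir_nth_2[OF assms(1)] assms(2,3)])
      (use assms(4-6) in \<open>simp_all add: c_par_eq d_par_eq\<close>)
qed

lemma param_maximal_invariant:
  "maximal_invariant {g1 :: real^'k^'k. invertible g1} param_act
     {(\<Delta>, \<mu>, \<Omega>0, \<Phi>). \<mu> \<noteq> (0 :: real^'k) \<and> pos_def_mat \<Omega>0 \<and> pos_def_mat (\<Phi> :: real^'k^'k)}
     (\<lambda>(\<Delta>, \<mu>, \<Omega>0, \<Phi>).
        let c = c_par \<Delta> \<Omega>0; d = d_par \<Delta> \<Omega>0; l = lambda_par \<mu> \<Phi>
        in (c\<^sup>2 * l, c * d * l, d\<^sup>2 * l, \<Omega>0))"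
  unfolding maximal_invariant_def
proof (intro conjI ballI impI)
  fix g :: "real^'k^'k" and x :: "real \<times> (real^'k) \<times> (real^2^2) \<times> (real^'k^'k)"
  assume "g \<in> {g1. invertible g1}"
    and "x \<in> {(\<Delta>, \<mu>, \<Omega>0, \<Phi>). \<mu> \<noteq> 0 \<and> pos_def_mat \<Omega>0 \<and> pos_def_mat \<Phi>}"
  then show "(case param_act g x of (\<Delta>, \<mu>, \<Omega>0, \<Phi>) \<Rightarrow>
        let c = c_par \<Delta> \<Omega>0; d = d_par \<Delta> \<Omega>0; l = lambda_par \<mu> \<Phi> in (c\<^sup>2 * l, c * d * l, d\<^sup>2 * l, \<Omega>0)) =
      (case x of (\<Delta>, \<mu>, \<Omega>0, \<Phi>) \<Rightarrow>
        let c = c_par \<Delta> \<Omega>0; d = d_par \<Delta> \<Omega>0; l = lambda_par \<mu> \<Phi> in (c\<^sup>2 * l, c * d * l, d\<^sup>2 * l, \<Omega>0))"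
    by (auto simp: param_act_def lambda_par_congruence)
next
  fix x y :: "real \<times> (real^'k) \<times> (real^2^2) \<times> (real^'k^'k)"
  assume "x \<in> {(\<Delta>, \<mu>, \<Omega>0, \<Phi>). \<mu> \<noteq> 0 \<and> pos_def_mat \<Omega>0 \<and> pos_def_mat \<Phi>}"
    and "y \<in> {(\<Delta>, \<mu>, \<Omega>0, \<Phi>). \<mu> \<noteq> 0 \<and> pos_def_mat \<Omega>0 \<and> pos_def_mat \<Phi>}"
    and "(case x of (\<Delta>, \<mu>, \<Omega>0, \<Phi>) \<Rightarrow>
          let c = c_par \<Delta> \<Omega>0; d = d_par \<Delta> \<Omega>0; l = lambda_par \<mu> \<Phi> in (c\<^sup>2 * l, c * d * l, d\<^sup>2 * l, \<Omega>0)) =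
         (case y of (\<Delta>, \<mu>, \<Omega>0, \<Phi>) \<Rightarrow>
          let c = c_par \<Delta> \<Omega>0; d = d_par \<Delta> \<Omega>0; l = lambda_par \<mu> \<Phi> in (c\<^sup>2 * l, c * d * l, d\<^sup>2 * l, \<Omega>0))"
  then obtain \<Delta> \<Delta>' \<mu> \<mu>' \<Omega>0 \<Phi> \<Phi>' where xy: "x = (\<Delta>, \<mu>, \<Omega>0, \<Phi>)" "y = (\<Delta>', \<mu>', \<Omega>0, \<Phi>')"
    and pd: "pos_def_mat \<Phi>" "pos_def_mat \<Phi>'" "pos_def_mat \<Omega>0" and "\<mu> \<noteq> 0" "\<mu>' \<noteq> 0"
    and "(c_par \<Delta> \<Omega>0)\<^sup>2 * lambda_par \<mu> \<Phi> = (c_par \<Delta>' \<Omega>0)\<^sup>2 * lambda_par \<mu>' \<Phi>'"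
      "c_par \<Delta> \<Omega>0 * d_par \<Delta> \<Omega>0 * lambda_par \<mu> \<Phi> = c_par \<Delta>' \<Omega>0 * d_par \<Delta>' \<Omega>0 * lambda_par \<mu>' \<Phi>'"
      "(d_par \<Delta> \<Omega>0)\<^sup>2 * lambda_par \<mu> \<Phi> = (d_par \<Delta>' \<Omega>0)\<^sup>2 * lambda_par \<mu>' \<Phi>'"
    by (auto simp: Let_def)
  then have "\<Delta> = \<Delta>'" and same_lambda: "lambda_par \<mu> \<Phi> = lambda_par \<mu>' \<Phi>'"
    using c_d_lambda_injective[OF pd(3) lambda_par_pos lambda_par_pos] by blast+
  obtain g where "invertible g" "g *v \<mu> = \<mu>'" "g ** \<Phi> ** transpose g = \<Phi>'"
    using congruence_exists_if_equal_gram[OF pd(1,2), of \<mu> \<mu>' \<mu> \<mu>'] same_lambda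
    unfolding lambda_par_def by metis
  with \<open>\<Delta> = \<Delta>'\<close> show "\<exists>g\<in>{g1. invertible g1}. y = param_act g x"
    by (auto simp: xy param_act_def)
qed

theorem theorem1:
  shows "maximal_invariant {g1 :: real^'k^'k. invertible g1} sample_act
           (sample_space :: ((real^2^'k) \<times> (real^2^2) \<times> (real^'k^'k)) set)
           (\<lambda>(R0, \<Omega>0, \<Phi>). (Q_stat R0 \<Omega>0 \<Phi>, \<Omega>0))
     \<and> maximal_invariant {g1 :: real^'k^'k. invertible g1} param_act
           {(\<Delta>, \<mu>, \<Omega>0, \<Phi>). \<mu> \<noteq> (0 :: real^'k) \<and> pos_def_mat \<Omega>0 \<and> pos_def_mat (\<Phi> :: real^'k^'k)}
           (\<lambda>(\<Delta>, \<mu>, \<Omega>0, \<Phi>).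
              let c = c_par \<Delta> \<Omega>0; d = d_par \<Delta> \<Omega>0; l = lambda_par \<mu> \<Phi>
              in (c\<^sup>2 * l, c * d * l, d\<^sup>2 * l, \<Omega>0))"
  using sample_maximal_invariant param_maximal_invariant by blast

end
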